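(* Let $A\in\mathbb{R}^{m_A\times n}$, $B\in\mathbb{R}^{m_B\times n}$, $b\in\mathbb{R}^{m_A}$, $d\in\mathbb{R}^{m_B}$, with $\operatorname{rk}\begin{pmatrix}A\\ B\end{pmatrix}=n$. Let $P=\{x\in\mathbb{R}^n: Ax=b,\ Bx\le d\}$, $M=\begin{pmatrix}A&0\\ B&I_{m_B}\end{pmatrix}$, $q=\begin{pmatrix}b\\ d\end{pmatrix}$, $\bar W=\ker(M)\subseteq\mathbb{R}^{n+m_B}$, $\bar P=\{(x,s)\in\mathbb{R}^n\times\mathbb{R}^{m_B}: M(x,s)=q,\ s\ge\mathbb{0}\}$, $W=\{s: (x,s)\in\bar W \text{ for some } x\}$, and $Q=\{s:(x,s)\in\bar P\text{ for some }x\}$. Then: (1) there is an invertible affine bijection $\psi: Q\to P$ defined by $M(\psi(s),s)=q$; (2) $g\in\mathbb{R}^n$ is an elementary vector in the sense that $g\in\ker(A)$ and $Bg$ is support-minimal in $\{By: y\in\ker(A),\ y\ne\mathbb{0}\}$ if and only if there exists $h\in\mathbb{R}^{m_B}$ with $(g,h)\in\bar W$, $h\ne\mathbb{0}$, and $h$ support-minimal among nonzero vectors of $W$; (3) for such a pair $(g,h)\in\bar W$ and any $s\in Q$, letting $s'=\operatorname{aug}_Q(s,h)$, we have $\psi(s')=\operatorname{aug}_P(\psi(s),g)$.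
   Context: For a polyhedron $R$, a point $x\in R$ and a direction $g$, $\operatorname{aug}_R(x,g)=x+\alpha g$ with $\alpha=\max\{\bar\alpha: x+\bar\alpha g\in R\}$ (the maximal step along $g$). Support-minimal in a set means no nonzero element of the set has strictly smaller support. *)

theory Defs
  imports "HOL-Analysis.Analysis"
begin

definition vjoin :: "real^'a \<Rightarrow> real^'b \<Rightarrow> real^('a + 'b)" where
  "vjoin x s = (\<chi> i. case i of Inl j \<Rightarrow> x $ j | Inr j \<Rightarrow> s $ j)"

definition vstack :: "real^'n^'m1 \<Rightarrow> real^'n^'m2 \<Rightarrow> real^'n^('m1 + 'm2)" where
  "vstack A B = (\<chi> i. case i of Inl r \<Rightarrow> A $ r | Inr r \<Rightarrow> B $ r)"

definition blockM :: "real^'n^'ma \<Rightarrow> real^'n^'mb \<Rightarrow> real^('n + 'mb)^('ma + 'mb)" where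
  "blockM A B = (\<chi> i j. case i of
       Inl r \<Rightarrow> (case j of Inl c \<Rightarrow> A $ r $ c | Inr c \<Rightarrow> 0)
     | Inr r \<Rightarrow> (case j of Inl c \<Rightarrow> B $ r $ c | Inr c \<Rightarrow> (if r = c then 1 else 0)))"

definition supp :: "real^'n \<Rightarrow> 'n set" where
  "supp v = {i. v $ i \<noteq> 0}"

definition support_minimal :: "(real^'n) set \<Rightarrow> real^'n \<Rightarrow> bool" where
  "support_minimal S v \<longleftrightarrow> v \<in> S \<and> \<not> (\<exists>w\<in>S. w \<noteq> 0 \<and> supp w \<subset> supp v)"

definition aug_defined :: "('a::real_vector) set \<Rightarrow> 'a \<Rightarrow> 'a \<Rightarrow> bool" where
  "aug_defined R x g \<longleftrightarrow> (\<exists>\<alpha>. x + \<alpha> *\<^sub>R g \<in> R \<and> (\<forall>\<beta>. x + \<beta> *\<^sub>R g \<in> R \<longrightarrow> \<beta> \<le> \<alpha>))"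

definition aug :: "('a::real_vector) set \<Rightarrow> 'a \<Rightarrow> 'a \<Rightarrow> 'a" where
  "aug R x g = x + (GREATEST \<alpha>. x + \<alpha> *\<^sub>R g \<in> R) *\<^sub>R g"

end

theory Submission
  imports Defs
begin

text \<open>Because the stacked matrix (A; B) has full column rank, a solution x of A x = b is
determined by its slack s = d - B x, and a left inverse of (A; B) recovers x from s affinely.
Under this correspondence the inequalities B x \<le> d become s \<ge> 0, and a kernel vector (g, h)
of M moves x along g exactly when it moves s along h, so both polyhedra allow the same step
lengths. Finally h = - B g, and negation preserves supports.\<close>

lemma vjoin_eq_iff [simp]: "vjoin x s = vjoin x' s' \<longleftrightarrow> x = x' \<and> s = s'"
proof
  assume eq: "vjoin x s = vjoin x' s'"
  have "x $ j = x' $ j" for j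
    using arg_cong[OF eq, of "\<lambda>v. v $ Inl j"] by (simp add: vjoin_def)
  moreover have "s $ j = s' $ j" for j
    using arg_cong[OF eq, of "\<lambda>v. v $ Inr j"] by (simp add: vjoin_def)
  ultimately show "x = x' \<and> s = s'" by (simp add: vec_eq_iff)
qed simp

lemma vjoin_0 [simp]: "vjoin 0 0 = 0"
  unfolding vjoin_def vec_eq_iff by (simp split: sum.split)

lemma vjoin_eq_0_iff: "vjoin x s = 0 \<longleftrightarrow> x = 0 \<and> s = 0"
  by (metis vjoin_0 vjoin_eq_iff)

lemma vjoin_add: "vjoin x s + vjoin x' s' = vjoin (x + x') (s + s')"
  unfolding vjoin_def vec_eq_iff by (simp split: sum.split)

lemma vjoin_scaleR: "c *\<^sub>R vjoin x s = vjoin (c *\<^sub>R x) (c *\<^sub>R s)"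
  unfolding vjoin_def vec_eq_iff by (simp split: sum.split)

lemma sum_UNIV_Plus:
  "(\<Sum>j\<in>UNIV. f j) = (\<Sum>j\<in>UNIV. f (Inl j)) + (\<Sum>j\<in>UNIV. f (Inr j))"
  for f :: "'a::finite + 'b::finite \<Rightarrow> 'c::comm_monoid_add"
  using sum.Plus[of "UNIV :: 'a set" "UNIV :: 'b set" f] by (simp add: comp_def)

lemma blockM_mult_vjoin: "blockM A B *v vjoin x s = vjoin (A *v x) (B *v x + s)"
proof -
  have "(blockM A B *v vjoin x s) $ i = vjoin (A *v x) (B *v x + s) $ i" for i
    by (cases i) (simp_all add: matrix_vector_mult_def blockM_def vjoin_def sum_UNIV_Plus
        mult_delta_left)
  then show ?thesis by (simp add: vec_eq_iff)
qed

lemma vstack_mult_vector: "vstack A B *v x = vjoin (A *v x) (B *v x)"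
proof -
  have "(vstack A B *v x) $ i = vjoin (A *v x) (B *v x) $ i" for i
    by (cases i) (simp_all add: matrix_vector_mult_def vstack_def vjoin_def)
  then show ?thesis by (simp add: vec_eq_iff)
qed

lemma supp_uminus [simp]: "supp (- v) = supp v"
  by (simp add: supp_def)

lemma support_minimal_uminus_image:
  "support_minimal (uminus ` S) (- v) \<longleftrightarrow> support_minimal S v"
proof -
  have "(\<exists>w\<in>uminus ` S. w \<noteq> 0 \<and> supp w \<subset> supp v) \<longleftrightarrow> (\<exists>w\<in>S. w \<noteq> 0 \<and> supp w \<subset> supp v)"
    by (metis (no_types, lifting) image_iff neg_equal_0_iff_equal supp_uminus)
  then show ?thesis
    by (simp add: support_minimal_def image_iff)
qed

lemma aug_defined_mem: "aug_defined R x g \<Longrightarrow> aug R x g \<in> R"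
  unfolding aug_defined_def aug_def by (metis (mono_tags, lifting) Greatest_equality)

lemma aug_transfer:
  assumes "\<And>\<beta>. x + \<beta> *\<^sub>R g \<in> R \<longleftrightarrow> y + \<beta> *\<^sub>R h \<in> S"
  obtains \<alpha> where "aug R x g = x + \<alpha> *\<^sub>R g" and "aug S y h = y + \<alpha> *\<^sub>R h"
proof -
  have "(\<lambda>\<beta>. x + \<beta> *\<^sub>R g \<in> R) = (\<lambda>\<beta>. y + \<beta> *\<^sub>R h \<in> S)"
    using assms by blast
  then show thesis
    using that[of "GREATEST \<beta>. y + \<beta> *\<^sub>R h \<in> S"] by (simp add: aug_def)
qed

locale slack_form =
  fixes A :: "real^'n^'ma" and B :: "real^'n^'mb" and b :: "real^'ma" and d :: "real^'mb"
  assumes full_rank: "rank (vstack A B) = CARD('n)"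
begin

definition polyhedron :: "(real^'n) set" where
  "polyhedron = {x. A *v x = b \<and> (\<forall>i. (B *v x) $ i \<le> d $ i)}"

definition slack_polyhedron :: "(real^'mb) set" where
  "slack_polyhedron = {s. (\<exists>x. A *v x = b \<and> B *v x + s = d) \<and> (\<forall>i. 0 \<le> s $ i)}"

definition slack_directions :: "(real^'mb) set" where
  "slack_directions = {s. \<exists>x. A *v x = 0 \<and> B *v x + s = 0}"

definition left_inverse :: "real^('ma + 'mb)^'n" where
  "left_inverse = (SOME C. C ** vstack A B = mat 1)"

definition point_of_slack :: "real^'mb \<Rightarrow> real^'n" where
  "point_of_slack s = left_inverse *v vjoin b (d - s)"

lemma left_inverse_mult: "left_inverse ** vstack A B = mat 1"
  unfolding left_inverse_def
  by (rule someI_ex) (use full_rank full_rank_injective matrix_left_invertible_injective in blast)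

lemma eq_if_same_images: "A *v x = A *v y \<Longrightarrow> B *v x = B *v y \<Longrightarrow> x = y"
  using full_rank full_rank_injective[of "vstack A B"] by (metis injD vstack_mult_vector)

lemma solution_unique:
  "A *v x = b \<Longrightarrow> B *v x + s = d \<Longrightarrow> A *v x' = b \<Longrightarrow> B *v x' + s = d \<Longrightarrow> x = x'"
  by (metis add_right_cancel eq_if_same_images)

lemma point_of_slack_eq:
  assumes "A *v x = b" and "B *v x + s = d"
  shows "point_of_slack s = x"
proof -
  have "vstack A B *v x = vjoin b (d - s)"
    using assms by (auto simp: vstack_mult_vector)
  then have "left_inverse *v (vstack A B *v x) = point_of_slack s"
    by (simp add: point_of_slack_def)
  then show ?thesis
    by (simp add: matrix_vector_mul_assoc left_inverse_mult)
qed

lemma point_of_slack_solves: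
  assumes "s \<in> slack_polyhedron"
  shows "A *v point_of_slack s = b \<and> B *v point_of_slack s + s = d"
proof -
  from assms obtain x where "A *v x = b" "B *v x + s = d"
    by (auto simp: slack_polyhedron_def)
  with point_of_slack_eq show ?thesis by simp
qed

lemma slack_polyhedron_iff_polyhedron:
  assumes "A *v x = b" and "B *v x + s = d"
  shows "s \<in> slack_polyhedron \<longleftrightarrow> x \<in> polyhedron"
proof -
  have "(B *v x) $ i \<le> d $ i \<longleftrightarrow> 0 \<le> s $ i" for i
    using arg_cong[OF assms(2), of "\<lambda>v. v $ i"] by auto
  then show ?thesis
    using assms by (auto simp: slack_polyhedron_def polyhedron_def)
qed

lemma slack_of_point:
  assumes "x \<in> polyhedron"
  shows "d - B *v x \<in> slack_polyhedron" and "point_of_slack (d - B *v x) = x"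
proof -
  have sol: "A *v x = b" "B *v x + (d - B *v x) = d"
    using assms by (simp_all add: polyhedron_def)
  from slack_polyhedron_iff_polyhedron[OF sol] assms
  show "d - B *v x \<in> slack_polyhedron" by simp
  from point_of_slack_eq[OF sol] show "point_of_slack (d - B *v x) = x" .
qed

lemma bij_betw_point_of_slack: "bij_betw point_of_slack slack_polyhedron polyhedron"
proof (rule bij_betw_byWitness[where f' = "\<lambda>x. d - B *v x"])
  show "\<forall>s\<in>slack_polyhedron. d - B *v point_of_slack s = s"
    using point_of_slack_solves by (metis add_diff_cancel_left')
  show "\<forall>x\<in>polyhedron. point_of_slack (d - B *v x) = x"
    using slack_of_point(2) by blast
  show "point_of_slack ` slack_polyhedron \<subseteq> polyhedron"
    using point_of_slack_solves slack_polyhedron_iff_polyhedron by blast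
  show "(\<lambda>x. d - B *v x) ` polyhedron \<subseteq> slack_polyhedron"
    using slack_of_point(1) by blast
qed

lemma inv_into_point_of_slack:
  "x \<in> polyhedron \<Longrightarrow> inv_into slack_polyhedron point_of_slack x = d - B *v x"
  using bij_betw_point_of_slack slack_of_point by (metis bij_betw_imp_inj_on inv_into_f_eq)

lemma point_of_slack_affine: "\<exists>L c. linear L \<and> (\<forall>s. point_of_slack s = L s + c)"
proof (intro exI conjI allI)
  show "linear (\<lambda>s. left_inverse *v vjoin 0 (- s))"
  proof (rule linearI)
    show "left_inverse *v vjoin 0 (- (x + y))
        = left_inverse *v vjoin 0 (- x) + left_inverse *v vjoin 0 (- y)" for x y :: "real^'mb"
      by (simp add: vjoin_add flip: matrix_vector_right_distrib)
    show "left_inverse *v vjoin 0 (- (c *\<^sub>R x)) = c *\<^sub>R (left_inverse *v vjoin 0 (- x))"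
      for c and x :: "real^'mb"
      by (simp add: vjoin_scaleR flip: matrix_vector_mult_scaleR)
  qed
  show "point_of_slack s = left_inverse *v vjoin 0 (- s) + left_inverse *v vjoin b d" for s
    by (simp add: point_of_slack_def vjoin_add flip: matrix_vector_right_distrib)
qed

lemma slack_of_point_affine:
  "\<exists>L c. linear L \<and> (\<forall>x\<in>polyhedron. inv_into slack_polyhedron point_of_slack x = L x + c)"
proof (intro exI conjI ballI)
  show "linear (\<lambda>x. - (B *v x))"
    by (rule linearI) (simp_all add: matrix_vector_right_distrib matrix_vector_mult_scaleR)
  show "inv_into slack_polyhedron point_of_slack x = - (B *v x) + d" if "x \<in> polyhedron" for x
    using that inv_into_point_of_slack by simp
qed

lemma slack_directions_nonzero:
  "slack_directions - {0} = uminus ` {B *v y | y. A *v y = 0 \<and> y \<noteq> 0}"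
proof -
  have nonzero: "B *v y \<noteq> 0" if "A *v y = 0" "y \<noteq> 0" for y
    using that eq_if_same_images[of y 0] by auto
  show ?thesis
  proof (intro set_eqI iffI)
    fix w assume "w \<in> slack_directions - {0}"
    then obtain x where "A *v x = 0" "w = - (B *v x)" "w \<noteq> 0"
      by (auto simp: slack_directions_def add_eq_0_iff)
    then show "w \<in> uminus ` {B *v y | y. A *v y = 0 \<and> y \<noteq> 0}"
      by fastforce
  next
    fix w assume "w \<in> uminus ` {B *v y | y. A *v y = 0 \<and> y \<noteq> 0}"
    then obtain y where "A *v y = 0" "y \<noteq> 0" "w = - (B *v y)"
      by blast
    with nonzero show "w \<in> slack_directions - {0}"
      by (auto simp: slack_directions_def add_eq_0_iff)
  qed
qed

lemma elementary_iff_support_minimal_slack: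
  "A *v g = 0 \<and> support_minimal {B *v y | y. A *v y = 0 \<and> y \<noteq> 0} (B *v g)
   \<longleftrightarrow> (\<exists>h. A *v g = 0 \<and> B *v g + h = 0 \<and> h \<noteq> 0 \<and> support_minimal (slack_directions - {0}) h)"
  (is "?lhs \<longleftrightarrow> ?rhs")
proof -
  have "?rhs \<longleftrightarrow> A *v g = 0 \<and> support_minimal (slack_directions - {0}) (- (B *v g))"
    by (simp add: add_eq_0_iff) (auto simp: support_minimal_def)
  also have "\<dots> \<longleftrightarrow> ?lhs"
    by (simp add: slack_directions_nonzero support_minimal_uminus_image)
  finally show ?thesis ..
qed

lemma map_aug_slack_polyhedron:
  assumes \<psi>: "\<And>s. s \<in> slack_polyhedron \<Longrightarrow> A *v \<psi> s = b \<and> B *v \<psi> s + s = d"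
    and dir: "A *v g = 0" "B *v g + h = 0"
    and s: "s \<in> slack_polyhedron" and defined: "aug_defined slack_polyhedron s h"
  shows "\<psi> (aug slack_polyhedron s h) = aug polyhedron (\<psi> s) g"
proof -
  have line: "A *v (\<psi> s + \<beta> *\<^sub>R g) = b \<and> B *v (\<psi> s + \<beta> *\<^sub>R g) + (s + \<beta> *\<^sub>R h) = d" for \<beta>
  proof -
    have "B *v (\<psi> s + \<beta> *\<^sub>R g) + (s + \<beta> *\<^sub>R h) = (B *v \<psi> s + s) + \<beta> *\<^sub>R (B *v g + h)"
      by (simp add: algebra_simps)
    with \<psi>[OF s] dir show ?thesis
      by (simp add: matrix_vector_right_distrib matrix_vector_mult_scaleR)
  qed
  then have "\<psi> s + \<beta> *\<^sub>R g \<in> polyhedron \<longleftrightarrow> s + \<beta> *\<^sub>R h \<in> slack_polyhedron" for \<beta>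
    using slack_polyhedron_iff_polyhedron by blast
  then obtain \<alpha> where augP: "aug polyhedron (\<psi> s) g = \<psi> s + \<alpha> *\<^sub>R g"
    and augQ: "aug slack_polyhedron s h = s + \<alpha> *\<^sub>R h"
    by (rule aug_transfer)
  \<comment> \<open>\<psi> is only pinned down on the slack polyhedron, so the endpoint must lie in it.\<close>
  have "s + \<alpha> *\<^sub>R h \<in> slack_polyhedron"
    using aug_defined_mem[OF defined] augQ by simp
  then show ?thesis
    using \<psi> line[of \<alpha>] augP augQ solution_unique by metis
qed

end

theorem lemma7p1:
  fixes A :: "real^'n^'ma" and B :: "real^'n^'mb" and b :: "real^'ma" and d :: "real^'mb"
    and P :: "(real^'n) set" and M :: "real^('n + 'mb)^('ma + 'mb)" and q :: "real^('ma + 'mb)"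
    and Wbar :: "(real^('n + 'mb)) set" and Pbar :: "(real^('n + 'mb)) set"
    and W Q :: "(real^'mb) set"
  assumes rk: "rank (vstack A B) = CARD('n)"
    and P_def: "P = {x. A *v x = b \<and> (\<forall>i. (B *v x) $ i \<le> d $ i)}"
    and M_def: "M = blockM A B"
    and q_def: "q = vjoin b d"
    and Wbar_def: "Wbar = {v. M *v v = 0}"
    and Pbar_def: "Pbar = {v. \<exists>x s. v = vjoin x s \<and> M *v v = q \<and> (\<forall>i. s $ i \<ge> 0)}"
    and W_def: "W = {s. \<exists>x. vjoin x s \<in> Wbar}"
    and Q_def: "Q = {s. \<exists>x. vjoin x s \<in> Pbar}"
  shows
    "(\<exists>\<psi>. bij_betw \<psi> Q P \<and> (\<forall>s\<in>Q. M *v vjoin (\<psi> s) s = q)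
          \<and> (\<exists>L c. linear L \<and> (\<forall>s\<in>Q. \<psi> s = L s + c))
          \<and> (\<exists>L' c'. linear L' \<and> (\<forall>x\<in>P. inv_into Q \<psi> x = L' x + c')))
   \<and> (\<forall>g. (A *v g = 0 \<and> support_minimal {B *v y | y. A *v y = 0 \<and> y \<noteq> 0} (B *v g))
          \<longleftrightarrow> (\<exists>h. vjoin g h \<in> Wbar \<and> h \<noteq> 0 \<and> support_minimal (W - {0}) h))
   \<and> (\<forall>\<psi>. (\<forall>s\<in>Q. M *v vjoin (\<psi> s) s = q) \<longrightarrow>
        (\<forall>g h s. vjoin g h \<in> Wbar \<and> h \<noteq> 0 \<and> support_minimal (W - {0}) h \<and> s \<in> Q
            \<and> aug_defined Q s h \<longrightarrow> \<psi> (aug Q s h) = aug P (\<psi> s) g))"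
proof -
  interpret slack_form A B b d
    using rk by unfold_locales
  have M_iff: "M *v vjoin x s = q \<longleftrightarrow> A *v x = b \<and> B *v x + s = d" for x s
    by (simp add: M_def q_def blockM_mult_vjoin)
  have Wbar_iff: "vjoin x s \<in> Wbar \<longleftrightarrow> A *v x = 0 \<and> B *v x + s = 0" for x s
    by (simp add: Wbar_def M_def blockM_mult_vjoin vjoin_eq_0_iff)
  have P: "P = polyhedron" and Q: "Q = slack_polyhedron" and W: "W = slack_directions"
    by (auto simp: P_def polyhedron_def Q_def Pbar_def slack_polyhedron_def M_iff
        W_def slack_directions_def Wbar_iff)
  have "\<exists>\<psi>. bij_betw \<psi> Q P \<and> (\<forall>s\<in>Q. M *v vjoin (\<psi> s) s = q)
          \<and> (\<exists>L c. linear L \<and> (\<forall>s\<in>Q. \<psi> s = L s + c))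
          \<and> (\<exists>L' c'. linear L' \<and> (\<forall>x\<in>P. inv_into Q \<psi> x = L' x + c'))"
    using bij_betw_point_of_slack point_of_slack_solves point_of_slack_affine slack_of_point_affine
    by (intro exI[of _ point_of_slack]) (auto simp: P Q M_iff)
  moreover have "A *v g = 0 \<and> support_minimal {B *v y | y. A *v y = 0 \<and> y \<noteq> 0} (B *v g)
      \<longleftrightarrow> (\<exists>h. vjoin g h \<in> Wbar \<and> h \<noteq> 0 \<and> support_minimal (W - {0}) h)" for g
    using elementary_iff_support_minimal_slack by (simp add: W Wbar_iff)
  moreover have "\<psi> (aug Q s h) = aug P (\<psi> s) g"
    if "\<forall>s\<in>Q. M *v vjoin (\<psi> s) s = q" and "vjoin g h \<in> Wbar" and "s \<in> Q"
      and "aug_defined Q s h" for \<psi> g h s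
    using that map_aug_slack_polyhedron by (simp add: P Q M_iff Wbar_iff)
  ultimately show ?thesis
    by simp
qed

end
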